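(* Let $\alpha\neq0$ and $b<0$. Then the set $\mathcal C=\bigcup_{u\in B}r_u$ is the unique control set of the system $\dot x=u\alpha x$, $\dot y=by+ux$ on $G$. Moreover, $\mathcal C=\operatorname{cl}\mathcal O^+(p)$ for every $p\in\mathcal C$.
   Context: Let $G=\{(x,y)\in\mathbb{R}^2:x>0\}$. Fix $\Omega=[u_*,u^*]$ with $u_*<0<u^*$. The admissible controls $\mathcal U$ are the piecewise constant functions $\mathbb{R}\to\Omega$. We write $\varphi(t,p,u)$ for the solutions and $\mathcal O^+(p)=\{\varphi(t,p,u):t\ge0,u\in\mathcal U\}$; closures are taken in $G$. For $u\in\mathbb{R}$ with $u\alpha\neq b$, set $m_u=\frac{u}{u\alpha-b}$ and $r_u=\{(x,y)\in G:y=m_ux\}$. Let $B=\{u\in\Omega:u\alpha-b>0\}$. A control set is a subset $\mathcal C\subset G$ that is maximal with respect to inclusion among the sets satisfying both of the following: (i) every $p\in\mathcal C$ admits $u\in\mathcal U$ with $\varphi(t,p,u)\in\mathcal C$ for all $t\ge0$; (ii) $\mathcal C\subset\operatorname{cl}\mathcal O^+(p)$ for all $p\in\mathcal C$. (This system is the image of $\Sigma$ with $\alpha(a\alpha+b\beta)\neq0$, $b<0$ under the map $(x,y)\mapsto(x,\gamma^{-1}(a(x-1)+by))$, where $\gamma=a\alpha+b\beta$.) *)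

theory Defs
  imports "HOL-Analysis.Analysis"
begin

type_synonym pt = "real \<times> real"

definition G :: "pt set" where
  "G = {p. fst p > 0}"

definition vf :: "real \<Rightarrow> real \<Rightarrow> real \<Rightarrow> pt \<Rightarrow> pt" where
  "vf \<alpha> b u p = (u * \<alpha> * fst p, b * snd p + u * fst p)"

definition loc_const :: "(real \<Rightarrow> real) \<Rightarrow> real \<Rightarrow> bool" where
  "loc_const u t \<longleftrightarrow> (\<exists>e>0. \<forall>s. \<bar>s - t\<bar> < e \<longrightarrow> u s = u t)"

text \<open>Admissible controls: piecewise constant functions R -> Omega = [umin, umax]
  (on every compact interval, locally constant off a finite set).\<close>
definition admissible :: "real \<Rightarrow> real \<Rightarrow> (real \<Rightarrow> real) \<Rightarrow> bool" where
  "admissible umin umax u \<longleftrightarrow>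
     (\<forall>t. u t \<in> {umin..umax}) \<and>
     (\<forall>a c. \<exists>S. finite S \<and> (\<forall>t\<in>{a..c} - S. loc_const u t))"

definition is_sol :: "real \<Rightarrow> real \<Rightarrow> pt \<Rightarrow> (real \<Rightarrow> real) \<Rightarrow> (real \<Rightarrow> pt) \<Rightarrow> bool" where
  "is_sol \<alpha> b p u gam \<longleftrightarrow> gam 0 = p \<and> continuous_on UNIV gam \<and>
     (\<forall>t. loc_const u t \<longrightarrow> (gam has_vector_derivative vf \<alpha> b (u t) (gam t)) (at t))"

definition phi :: "real \<Rightarrow> real \<Rightarrow> real \<Rightarrow> pt \<Rightarrow> (real \<Rightarrow> real) \<Rightarrow> pt" where
  "phi \<alpha> b t p u = (THE gam. is_sol \<alpha> b p u gam) t"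

definition orbit_plus :: "real \<Rightarrow> real \<Rightarrow> real \<Rightarrow> real \<Rightarrow> pt \<Rightarrow> pt set" where
  "orbit_plus \<alpha> b umin umax p =
     {phi \<alpha> b t p u | t u. t \<ge> 0 \<and> admissible umin umax u}"

text \<open>Closure taken in G (subspace topology).\<close>
definition clG :: "pt set \<Rightarrow> pt set" where
  "clG A = closure A \<inter> G"

definition cs_prop :: "real \<Rightarrow> real \<Rightarrow> real \<Rightarrow> real \<Rightarrow> pt set \<Rightarrow> bool" where
  "cs_prop \<alpha> b umin umax C \<longleftrightarrow> C \<subseteq> G \<and>
     (\<forall>p\<in>C. \<exists>u. admissible umin umax u \<and> (\<forall>t\<ge>0. phi \<alpha> b t p u \<in> C)) \<and>
     (\<forall>p\<in>C. C \<subseteq> clG (orbit_plus \<alpha> b umin umax p))"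

definition control_set :: "real \<Rightarrow> real \<Rightarrow> real \<Rightarrow> real \<Rightarrow> pt set \<Rightarrow> bool" where
  "control_set \<alpha> b umin umax C \<longleftrightarrow> cs_prop \<alpha> b umin umax C \<and>
     (\<forall>D. cs_prop \<alpha> b umin umax D \<and> C \<subseteq> D \<longrightarrow> D = C)"

definition m_slope :: "real \<Rightarrow> real \<Rightarrow> real \<Rightarrow> real" where
  "m_slope \<alpha> b u = u / (u * \<alpha> - b)"

definition ray :: "real \<Rightarrow> real \<Rightarrow> real \<Rightarrow> pt set" where
  "ray \<alpha> b u = {p \<in> G. snd p = m_slope \<alpha> b u * fst p}"

definition Bset :: "real \<Rightarrow> real \<Rightarrow> real \<Rightarrow> real \<Rightarrow> real set" where
  "Bset \<alpha> b umin umax = {u \<in> {umin..umax}. u * \<alpha> - b > 0}"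

end

theory Submission
  imports Defs
begin

text \<open>
  The linear form \<open>ray_form \<alpha> b c p = c (x - \<alpha> y) + b y\<close> vanishes exactly on the ray \<open>r\<^sub>c\<close>
  and, along a trajectory with control \<open>u\<close>, has derivative \<open>b \<cdot> ray_form + b (u - c) x\<close>.
  Since \<open>b < 0\<close> and \<open>x > 0\<close>, the sector \<open>C\<close> between the extreme rays for \<open>umin\<close> and
  \<open>umax\<close> is forward invariant. At a point outside \<open>C\<close> one of the two forms is negative, and a
  negative value can shrink in modulus at most by the factor \<open>exp (b t)\<close>; so the orbit of such a
  point stays away from it and the point lies in no control set.
  Conversely every point of \<open>C\<close> is approached from every other one: a small control \<open>\<plusminus>\<delta>\<close>
  brings \<open>x\<close> to a prescribed value, after which a constant control \<open>u\<^sub>1\<close> pulls the trajectory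
  exponentially onto the ray \<open>r\<^sub>u\<^sub>1\<close> through the target. Solutions are computed explicitly by
  variation of constants.
\<close>

section \<open>Calculus on the real line\<close>

lemma increasing_if_deriv_nonneg_off_finite:
  fixes f f' :: "real \<Rightarrow> real"
  assumes "a \<le> c" "finite F" "continuous_on {a..c} f"
    "\<And>t. t \<in> {a<..<c} - F \<Longrightarrow> (f has_real_derivative f' t) (at t)"
    "\<And>t. t \<in> {a<..<c} - F \<Longrightarrow> 0 \<le> f' t"
  shows "f a \<le> f c"
proof -
  define g where "g t = (if t \<in> {a<..<c} - F then f' t else 0)" for t
  have "(g has_integral (f c - f a)) {a..c}"
    by (rule fundamental_theorem_of_calculus_interior_strong[OF assms(2,1) _ assms(3)])
       (use assms(4) in \<open>auto simp: g_def has_real_derivative_iff_has_vector_derivative\<close>)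
  then have "0 \<le> f c - f a"
    by (rule has_integral_nonneg) (use assms(5) in \<open>auto simp: g_def\<close>)
  then show ?thesis by simp
qed

lemma constant_if_deriv_zero_off_locally_finite:
  fixes f :: "real \<Rightarrow> real"
  assumes cont: "continuous_on UNIV f" and fin: "\<And>a c. finite (Bad \<inter> {a..c})"
    and deriv: "\<And>t. t \<notin> Bad \<Longrightarrow> (f has_real_derivative 0) (at t)"
  shows "f t = f 0"
proof -
  have mono: "g (min t 0) \<le> g (max t 0)"
    if "continuous_on UNIV g" "\<And>t. t \<notin> Bad \<Longrightarrow> (g has_real_derivative 0) (at t)" for g
  proof (rule increasing_if_deriv_nonneg_off_finite[where F="Bad \<inter> {min t 0..max t 0}" and f=g and f'="\<lambda>_. 0"])
    show "continuous_on {min t 0..max t 0} g" using that(1) by (rule continuous_on_subset) simp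
  qed (use that(2) fin in auto)
  have "(\<lambda>t. - f t) (min t 0) \<le> (\<lambda>t. - f t) (max t 0)"
  proof (rule mono)
    show "continuous_on UNIV (\<lambda>t. - f t)" using cont by (intro continuous_intros)
    show "((\<lambda>t. - f t) has_real_derivative 0) (at s)" if "s \<notin> Bad" for s
      using DERIV_minus[OF deriv[OF that]] by simp
  qed
  with mono[OF cont deriv] show ?thesis
    by (cases "t \<le> 0") (auto simp: min_def max_def)
qed

lemma exp_lower_bound_if_deriv_ge:
  fixes f f' :: "real \<Rightarrow> real"
  assumes cont: "continuous_on UNIV f" and fin: "\<And>a c. finite (Bad \<inter> {a..c})"
    and deriv: "\<And>t. t \<notin> Bad \<Longrightarrow> (f has_real_derivative f' t) (at t)"
    and ge: "\<And>t. t \<notin> Bad \<Longrightarrow> k * f t \<le> f' t" and "0 \<le> t"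
  shows "exp (k * t) * f 0 \<le> f t"
proof -
  have "exp (- k * 0) * f 0 \<le> exp (- k * t) * f t"
  proof (rule increasing_if_deriv_nonneg_off_finite[OF \<open>0 \<le> t\<close> fin,
        where f'="\<lambda>s. exp (- k * s) * (f' s - k * f s)"])
    show "continuous_on {0..t} (\<lambda>s. exp (- k * s) * f s)"
      by (intro continuous_intros continuous_on_subset[OF cont]) auto
    fix s assume "s \<in> {0<..<t} - Bad \<inter> {0..t}"
    then have s: "s \<notin> Bad" by auto
    show "((\<lambda>s. exp (- k * s) * f s) has_real_derivative exp (- k * s) * (f' s - k * f s)) (at s)"
      by (rule derivative_eq_intros refl deriv[OF s] | simp)+ (simp add: algebra_simps)
    show "0 \<le> exp (- k * s) * (f' s - k * f s)"
      using ge[OF s] by simp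
  qed
  then have "exp (k * t) * f 0 \<le> exp (k * t) * (exp (- k * t) * f t)"
    by (intro mult_left_mono) auto
  then show ?thesis by (simp add: mult.assoc[symmetric] exp_add[symmetric])
qed

lemma has_real_derivative_fst:
  "(g has_vector_derivative v) (at t) \<Longrightarrow> ((\<lambda>s. fst (g s)) has_real_derivative fst v) (at t)"
  unfolding has_vector_derivative_def has_field_derivative_def
  by (drule has_derivative_fst) (simp add: mult_commute_abs)

lemma has_real_derivative_snd:
  "(g has_vector_derivative v) (at t) \<Longrightarrow> ((\<lambda>s. snd (g s)) has_real_derivative snd v) (at t)"
  unfolding has_vector_derivative_def has_field_derivative_def
  by (drule has_derivative_snd) (simp add: mult_commute_abs)

lemma mem_closure_if_exp_approx:
  fixes q :: "'a::metric_space"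
  assumes "0 < k" "\<And>T. 0 \<le> T \<Longrightarrow> \<exists>r\<in>A. dist r q \<le> K * exp (- k * T)"
  shows "q \<in> closure A"
  unfolding closure_approachable
proof (intro allI impI)
  fix e :: real assume "0 < e"
  have "LIM T at_top. - k * T :> at_bot"
    using \<open>0 < k\<close> by (intro filterlim_tendsto_neg_mult_at_bot[OF tendsto_const] filterlim_ident) auto
  then have "((\<lambda>T. K * exp (- k * T)) \<longlongrightarrow> K * 0) at_top"
    by (intro tendsto_mult tendsto_const filterlim_compose[OF exp_at_bot])
  then have "eventually (\<lambda>T. 0 \<le> T \<and> K * exp (- k * T) < e) at_top"
    using \<open>0 < e\<close> by (intro eventually_conj eventually_ge_at_top) (auto dest: order_tendstoD(2))
  then obtain T where "0 \<le> T" "K * exp (- k * T) < e"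
    by (auto dest: eventually_happens)
  with assms(2) show "\<exists>r\<in>A. dist r q < e" by force
qed

section \<open>Piecewise constant controls\<close>

definition switching_times :: "(real \<Rightarrow> real) \<Rightarrow> real set" where
  "switching_times u = {t. \<not> loc_const u t}"

lemma loc_const_isCont: "loc_const u t \<Longrightarrow> isCont u t"
  unfolding isCont_def loc_const_def
  by (rule tendsto_eventually)
     (auto simp: eventually_at_filter eventually_nhds_metric dist_real_def)

lemma admissible_bounded:
  assumes "admissible umin umax u"
  shows "\<bar>u t\<bar> \<le> max \<bar>umin\<bar> \<bar>umax\<bar>"
proof -
  have "u t \<in> {umin..umax}" using assms unfolding admissible_def by blast
  then show ?thesis by (auto simp: abs_if max_def)
qed

lemma finite_switching_times:
  assumes "admissible umin umax u"
  shows "finite (switching_times u \<inter> {a..c})"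
proof -
  obtain S where "finite S" "\<forall>t\<in>{a..c} - S. loc_const u t"
    using assms unfolding admissible_def by blast
  then show ?thesis
    by (auto simp: switching_times_def intro: finite_subset[of _ S])
qed

lemma admissible_const: "umin \<le> c \<Longrightarrow> c \<le> umax \<Longrightarrow> admissible umin umax (\<lambda>_. c)"
  unfolding admissible_def loc_const_def by (auto intro!: exI[of _ "{}"] exI[of _ 1])

lemma admissible_switch:
  assumes "c1 \<in> {umin..umax}" "c2 \<in> {umin..umax}"
  shows "admissible umin umax (\<lambda>t. if t < t1 then c1 else c2)"
  unfolding admissible_def
proof (intro conjI allI)
  fix a c
  have "loc_const (\<lambda>t. if t < t1 then c1 else c2) t" if "t \<noteq> t1" for t
    unfolding loc_const_def using that by (intro exI[of _ "\<bar>t - t1\<bar>"]) auto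
  then show "\<exists>S. finite S \<and> (\<forall>t\<in>{a..c} - S. loc_const (\<lambda>t. if t < t1 then c1 else c2) t)"
    by (intro exI[of _ "{t1}"]) auto
qed (use assms in auto)

lemma integrable_if_continuous_off_finite:
  fixes f g :: "real \<Rightarrow> real"
  assumes "finite F" "\<And>t. t \<in> {a..c} - F \<Longrightarrow> isCont f t" "continuous_on {a..c} g"
    "\<And>t. t \<in> {a..c} \<Longrightarrow> \<bar>f t\<bar> \<le> g t"
  shows "f integrable_on {a..c}"
proof -
  let ?S = "{a..c} - F"
  have neg: "negligible (({a..c} - ?S) \<union> (?S - {a..c}))"
    using assms(1) by (auto intro: negligible_subset[of F])
  have S: "?S \<in> sets lebesgue"
    using assms(1) by (intro sets.Diff) (auto intro: negligible_imp_sets negligible_finite)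
  have "continuous_on ?S f"
    using assms(2) by (simp add: continuous_at_imp_continuous_on)
  then have meas: "f \<in> borel_measurable (lebesgue_on ?S)"
    using S continuous_imp_measurable_on_sets_lebesgue by blast
  have "g integrable_on ?S"
    using integrable_continuous_interval[OF assms(3)] integrable_spike_set_eq[OF neg] by blast
  then have "f integrable_on ?S"
    by (rule measurable_bounded_by_integrable_imp_integrable[OF meas]) (use assms(4) S in auto)
  then show ?thesis using integrable_spike_set_eq[OF neg] by blast
qed

definition primitive :: "(real \<Rightarrow> real) \<Rightarrow> real \<Rightarrow> real" where
  "primitive f t = integral {0..t} f - integral {t..0} f"

lemma primitive_0 [simp]: "primitive f 0 = 0"
  unfolding primitive_def by simp

lemma primitive_eq_integral_diff:
  assumes "\<And>a c. f integrable_on {a..c}" "a \<le> t" "a \<le> 0"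
  shows "primitive f t = integral {a..t} f - integral {a..0} f"
proof (cases "0 \<le> t")
  case True
  moreover have "integral {t..0} f = 0"
    using True by (cases "t = 0") auto
  ultimately show ?thesis
    using Henstock_Kurzweil_Integration.integral_combine[OF assms(3) True assms(1)] by (simp add: primitive_def)
next
  case False
  then show ?thesis
    using Henstock_Kurzweil_Integration.integral_combine[OF assms(2) _ assms(1), of 0] by (simp add: primitive_def)
qed

lemma
  assumes "\<And>a c. f integrable_on {a..c}"
  shows isCont_primitive: "isCont (primitive f) t"
    and has_real_derivative_primitive: "isCont f t \<Longrightarrow> (primitive f has_real_derivative f t) (at t)"
proof -
  define a where "a = min t 0 - 1"
  define c where "c = max t 0 + 1"
  have t: "t \<in> {a<..<c}" unfolding a_def c_def by auto
  have eq: "primitive f s = integral {a..s} f - integral {a..0} f" if "s \<in> {a..c}" for s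
    using that by (intro primitive_eq_integral_diff assms) (auto simp: a_def c_def)
  have "continuous_on {a..c} (\<lambda>s. integral {a..s} f - integral {a..0} f)"
    by (intro continuous_intros indefinite_integral_continuous_1 assms)
  then have "continuous_on {a..c} (primitive f)"
    by (rule continuous_on_cong[THEN iffD1, rotated 2]) (simp_all add: eq)
  then show "isCont (primitive f) t"
    using t by (intro continuous_on_interior) (auto simp: interior_atLeastAtMost_real)
  assume "isCont f t"
  then have "((\<lambda>s. integral {a..s} f) has_vector_derivative f t) (at t within {a..c})"
    using t by (intro integral_has_vector_derivative_continuous_at[OF assms, where S="{}", simplified])
      (auto intro: continuous_at_imp_continuous_within)
  moreover have "at t within {a..c} = at t"
    using t by (intro at_within_interior) (auto simp: interior_atLeastAtMost_real)
  ultimately have "((\<lambda>s. integral {a..s} f - integral {a..0} f) has_vector_derivative f t) (at t)"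
    using has_vector_derivative_diff[OF _ has_vector_derivative_const] by fastforce
  then have "(primitive f has_vector_derivative f t) (at t)"
    by (rule has_vector_derivative_transform_within_open[where S="{a<..<c}"]) (use t eq in auto)
  then show "(primitive f has_real_derivative f t) (at t)"
    by (simp add: has_real_derivative_iff_has_vector_derivative)
qed

section \<open>Solutions\<close>

lemma admissible_integrable:
  assumes "admissible umin umax u"
  shows "u integrable_on {a..c}"
  by (rule integrable_if_continuous_off_finite[OF finite_switching_times[OF assms],
        where g="\<lambda>_. max \<bar>umin\<bar> \<bar>umax\<bar>"])
     (auto simp: switching_times_def intro: loc_const_isCont admissible_bounded[OF assms])

text \<open>Variation of constants: \<open>y t = exp (b t) (y 0 + \<integral>\<^sub>0\<^sup>t exp (- b s) u s x s ds)\<close>.\<close>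

definition sol_x :: "real \<Rightarrow> (real \<Rightarrow> real) \<Rightarrow> pt \<Rightarrow> real \<Rightarrow> real" where
  "sol_x \<alpha> u p t = fst p * exp (\<alpha> * primitive u t)"

definition sol_w :: "real \<Rightarrow> real \<Rightarrow> (real \<Rightarrow> real) \<Rightarrow> pt \<Rightarrow> real \<Rightarrow> real" where
  "sol_w \<alpha> b u p = primitive (\<lambda>s. exp (- b * s) * u s * sol_x \<alpha> u p s)"

definition sol :: "real \<Rightarrow> real \<Rightarrow> (real \<Rightarrow> real) \<Rightarrow> pt \<Rightarrow> real \<Rightarrow> pt" where
  "sol \<alpha> b u p t = (sol_x \<alpha> u p t, exp (b * t) * (snd p + sol_w \<alpha> b u p t))"

lemma isCont_sol_x: "admissible umin umax u \<Longrightarrow> isCont (sol_x \<alpha> u p) t"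
  unfolding sol_x_def by (intro continuous_intros isCont_primitive admissible_integrable)

lemma sol_w_integrand_integrable:
  assumes "admissible umin umax u"
  shows "(\<lambda>s. exp (- b * s) * u s * sol_x \<alpha> u p s) integrable_on {a..c}"
proof (rule integrable_if_continuous_off_finite[OF finite_switching_times[OF assms],
      where g="\<lambda>s. exp (- b * s) * max \<bar>umin\<bar> \<bar>umax\<bar> * \<bar>sol_x \<alpha> u p s\<bar>"])
  fix t assume "t \<in> {a..c} - switching_times u \<inter> {a..c}"
  then have "isCont u t" by (auto simp: switching_times_def intro: loc_const_isCont)
  then show "isCont (\<lambda>s. exp (- b * s) * u s * sol_x \<alpha> u p s) t"
    by (intro continuous_intros isCont_sol_x[OF assms])
next
  show "continuous_on {a..c} (\<lambda>s. exp (- b * s) * max \<bar>umin\<bar> \<bar>umax\<bar> * \<bar>sol_x \<alpha> u p s\<bar>)"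
    by (intro continuous_at_imp_continuous_on ballI continuous_intros isCont_sol_x[OF assms])
  fix t
  have "\<bar>u t\<bar> * \<bar>sol_x \<alpha> u p t\<bar> \<le> max \<bar>umin\<bar> \<bar>umax\<bar> * \<bar>sol_x \<alpha> u p t\<bar>"
    by (rule mult_right_mono[OF admissible_bounded[OF assms]]) simp
  then show "\<bar>exp (- b * t) * u t * sol_x \<alpha> u p t\<bar> \<le> exp (- b * t) * max \<bar>umin\<bar> \<bar>umax\<bar> * \<bar>sol_x \<alpha> u p t\<bar>"
    by (simp add: abs_mult mult.assoc)
qed

lemma
  assumes "admissible umin umax u" "loc_const u t"
  shows has_real_derivative_sol_x: "(sol_x \<alpha> u p has_real_derivative u t * \<alpha> * sol_x \<alpha> u p t) (at t)"
    and has_real_derivative_sol_w: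
      "(sol_w \<alpha> b u p has_real_derivative exp (- b * t) * u t * sol_x \<alpha> u p t) (at t)"
proof -
  have u: "isCont u t" using assms(2) by (rule loc_const_isCont)
  have "(primitive u has_real_derivative u t) (at t)"
    by (rule has_real_derivative_primitive[OF admissible_integrable[OF assms(1)] u])
  then show "(sol_x \<alpha> u p has_real_derivative u t * \<alpha> * sol_x \<alpha> u p t) (at t)"
    unfolding sol_x_def by (auto intro!: derivative_eq_intros)
  show "(sol_w \<alpha> b u p has_real_derivative exp (- b * t) * u t * sol_x \<alpha> u p t) (at t)"
    unfolding sol_w_def
    by (intro has_real_derivative_primitive sol_w_integrand_integrable[OF assms(1)] continuous_intros
        u isCont_sol_x[OF assms(1)])
qed

lemma sol_has_vector_derivative:
  assumes "admissible umin umax u" "loc_const u t"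
  shows "(sol \<alpha> b u p has_vector_derivative vf \<alpha> b (u t) (sol \<alpha> b u p t)) (at t)"
proof -
  have "((\<lambda>t. exp (b * t)) has_real_derivative exp (b * t) * b) (at t)"
    by (auto intro!: derivative_eq_intros)
  from DERIV_mult[OF this DERIV_add[OF DERIV_const has_real_derivative_sol_w[OF assms]]]
  have "((\<lambda>t. exp (b * t) * (snd p + sol_w \<alpha> b u p t)) has_real_derivative
      b * (exp (b * t) * (snd p + sol_w \<alpha> b u p t)) + u t * sol_x \<alpha> u p t) (at t)"
    by (rule DERIV_cong) (simp add: field_simps exp_minus)
  with has_real_derivative_sol_x[OF assms, of \<alpha> p] show ?thesis
    unfolding sol_def[abs_def] vf_def
    by (auto simp: has_real_derivative_iff_has_vector_derivative intro!: has_vector_derivative_Pair)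
qed

lemma is_sol_sol:
  assumes "admissible umin umax u"
  shows "is_sol \<alpha> b p u (sol \<alpha> b u p)"
  unfolding is_sol_def
proof (intro conjI allI impI)
  show "sol \<alpha> b u p 0 = p" by (simp add: sol_def sol_x_def sol_w_def)
  show "continuous_on UNIV (sol \<alpha> b u p)"
    unfolding sol_def[abs_def] sol_w_def
    by (intro continuous_at_imp_continuous_on ballI continuous_intros isCont_sol_x[OF assms]
        isCont_primitive sol_w_integrand_integrable[OF assms])
qed (rule sol_has_vector_derivative[OF assms])

text \<open>Along any solution \<open>x exp (- \<alpha> \<integral>u)\<close> and \<open>exp (- b t) y - sol_w\<close> are constant.\<close>

lemma sol_unique:
  fixes g :: "real \<Rightarrow> pt"
  assumes adm: "admissible umin umax u" and cont: "continuous_on UNIV g" and "g 0 = p"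
    and fin: "\<And>a c. finite (Bad \<inter> {a..c})"
    and deriv: "\<And>t. t \<notin> Bad \<Longrightarrow> (g has_vector_derivative vf \<alpha> b (u t) (g t)) (at t)"
  shows "g t = sol \<alpha> b u p t"
proof -
  let ?Bad = "Bad \<union> switching_times u"
  have fin': "finite (?Bad \<inter> {a..c})" for a c
    using fin[of a c] finite_switching_times[OF adm, of a c] by (simp add: Int_Un_distrib2)
  have lc: "loc_const u s" if "s \<notin> ?Bad" for s
    using that by (simp add: switching_times_def)
  have dx: "((\<lambda>s. fst (g s)) has_real_derivative u s * \<alpha> * fst (g s)) (at s)"
    and dy: "((\<lambda>s. snd (g s)) has_real_derivative b * snd (g s) + u s * fst (g s)) (at s)"
    if "s \<notin> ?Bad" for s
    using has_real_derivative_fst[OF deriv] has_real_derivative_snd[OF deriv] that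
    by (auto simp: vf_def)
  have cont_fst: "continuous_on UNIV (\<lambda>s. fst (g s))" and cont_snd: "continuous_on UNIV (\<lambda>s. snd (g s))"
    using cont by (auto intro: continuous_on_fst continuous_on_snd)
  have x: "fst (g s) = sol_x \<alpha> u p s" for s
  proof -
    have "fst (g s) * exp (- (\<alpha> * primitive u s)) = fst (g 0) * exp (- (\<alpha> * primitive u 0))"
    proof (rule constant_if_deriv_zero_off_locally_finite[OF _ fin'])
      show "continuous_on UNIV (\<lambda>s. fst (g s) * exp (- (\<alpha> * primitive u s)))"
        by (intro continuous_intros cont_fst continuous_at_imp_continuous_on ballI
            isCont_primitive admissible_integrable[OF adm])
      fix s assume s: "s \<notin> ?Bad"
      note du = has_real_derivative_primitive[OF admissible_integrable[OF adm] loc_const_isCont[OF lc[OF s]]]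
      show "((\<lambda>s. fst (g s) * exp (- (\<alpha> * primitive u s))) has_real_derivative 0) (at s)"
        by (rule DERIV_cong, rule derivative_eq_intros dx[OF s] du refl | simp)+
    qed
    then show ?thesis
      using \<open>g 0 = p\<close> by (simp add: sol_x_def exp_minus field_simps)
  qed
  have "exp (- b * s) * snd (g s) - sol_w \<alpha> b u p s = exp (- b * 0) * snd (g 0) - sol_w \<alpha> b u p 0" for s
  proof (rule constant_if_deriv_zero_off_locally_finite[OF _ fin'])
    show "continuous_on UNIV (\<lambda>s. exp (- b * s) * snd (g s) - sol_w \<alpha> b u p s)"
      unfolding sol_w_def
      by (intro continuous_intros cont_snd continuous_at_imp_continuous_on ballI
          isCont_primitive sol_w_integrand_integrable[OF adm])
    fix s assume s: "s \<notin> ?Bad"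
    note dw = has_real_derivative_sol_w[OF adm lc[OF s], where \<alpha>=\<alpha> and b=b and p=p]
    show "((\<lambda>s. exp (- b * s) * snd (g s) - sol_w \<alpha> b u p s) has_real_derivative 0) (at s)"
      by (rule DERIV_cong, rule derivative_eq_intros dy[OF s] dw refl | simp)+ (simp add: x algebra_simps)
  qed
  then have "snd (g t) = exp (b * t) * (snd p + sol_w \<alpha> b u p t)"
    using \<open>g 0 = p\<close> by (simp add: sol_w_def exp_minus field_simps)
  with x show ?thesis by (simp add: sol_def prod_eq_iff)
qed

lemma phi_eq_sol:
  assumes "admissible umin umax u"
  shows "phi \<alpha> b t p u = sol \<alpha> b u p t"
proof -
  have "(THE gam. is_sol \<alpha> b p u gam) = sol \<alpha> b u p"
  proof (rule the_equality)
    show "is_sol \<alpha> b p u (sol \<alpha> b u p)" by (rule is_sol_sol[OF assms])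
    show "gam = sol \<alpha> b u p" if "is_sol \<alpha> b p u gam" for gam
      using that
      by (auto simp: is_sol_def switching_times_def fun_eq_iff
          intro!: sol_unique[OF assms, where Bad="switching_times u"] finite_switching_times[OF assms])
  qed
  then show ?thesis unfolding phi_def by simp
qed

lemma phi_eq_solution:
  fixes g :: "real \<Rightarrow> pt"
  assumes "admissible umin umax u" "continuous_on UNIV g" "g 0 = p" "\<And>a c. finite (Bad \<inter> {a..c})"
    "\<And>t. t \<notin> Bad \<Longrightarrow> (g has_vector_derivative vf \<alpha> b (u t) (g t)) (at t)"
  shows "phi \<alpha> b t p u = g t"
  using phi_eq_sol[OF assms(1)] sol_unique[OF assms] by simp

lemma
  assumes "admissible umin umax u"
  shows continuous_on_phi: "continuous_on UNIV (\<lambda>t. phi \<alpha> b t p u)"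
    and phi_has_vector_derivative: "loc_const u t \<Longrightarrow>
      ((\<lambda>t. phi \<alpha> b t p u) has_vector_derivative vf \<alpha> b (u t) (phi \<alpha> b t p u)) (at t)"
  using is_sol_sol[OF assms, of \<alpha> b p] by (simp_all add: phi_eq_sol[OF assms] is_sol_def)

lemma phi_0: "admissible umin umax u \<Longrightarrow> phi \<alpha> b 0 p u = p"
  by (simp add: phi_eq_sol sol_def sol_x_def sol_w_def)

lemma fst_phi_pos: "admissible umin umax u \<Longrightarrow> 0 < fst p \<Longrightarrow> 0 < fst (phi \<alpha> b t p u)"
  by (simp add: phi_eq_sol sol_def sol_x_def)

section \<open>The invariant sector\<close>

definition ray_form :: "real \<Rightarrow> real \<Rightarrow> real \<Rightarrow> pt \<Rightarrow> real" where
  "ray_form \<alpha> b c p = c * (fst p - \<alpha> * snd p) + b * snd p"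

lemma continuous_on_ray_form: "continuous_on S (ray_form \<alpha> b c)"
  unfolding ray_form_def by (intro continuous_intros)

lemma ray_form_phi_has_real_derivative:
  assumes "admissible umin umax u" "loc_const u t"
  shows "((\<lambda>s. ray_form \<alpha> b c (phi \<alpha> b s p u)) has_real_derivative
    b * ray_form \<alpha> b c (phi \<alpha> b t p u) + b * (u t - c) * fst (phi \<alpha> b t p u)) (at t)"
proof -
  note d = phi_has_vector_derivative[OF assms, of \<alpha> b p]
  show ?thesis
    unfolding ray_form_def
    by (rule DERIV_cong, rule derivative_eq_intros has_real_derivative_fst[OF d]
        has_real_derivative_snd[OF d] refl | simp)+ (simp add: vf_def algebra_simps)
qed

lemma
  assumes adm: "admissible umin umax u" and "b \<le> 0" "0 < fst p" "0 \<le> t"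
  shows exp_mult_ray_form_le: "(\<And>s. u s \<le> c) \<Longrightarrow>
      exp (b * t) * ray_form \<alpha> b c p \<le> ray_form \<alpha> b c (phi \<alpha> b t p u)"
    and ray_form_le_exp_mult: "(\<And>s. c \<le> u s) \<Longrightarrow>
      ray_form \<alpha> b c (phi \<alpha> b t p u) \<le> exp (b * t) * ray_form \<alpha> b c p"
proof -
  let ?L = "\<lambda>s. ray_form \<alpha> b c (phi \<alpha> b s p u)"
  have cont: "continuous_on UNIV ?L"
    by (rule continuous_on_compose2[OF continuous_on_ray_form continuous_on_phi[OF adm]]) auto
  have fin: "finite (switching_times u \<inter> {a..c})" for a c
    by (rule finite_switching_times[OF adm])
  note deriv = ray_form_phi_has_real_derivative[OF adm, where c=c]
  have x: "0 < fst (phi \<alpha> b s p u)" for s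
    by (rule fst_phi_pos[OF adm \<open>0 < fst p\<close>])
  show "exp (b * t) * ray_form \<alpha> b c p \<le> ?L t" if "\<And>s. u s \<le> c"
  proof -
    have "exp (b * t) * ?L 0 \<le> ?L t"
    proof (rule exp_lower_bound_if_deriv_ge[OF cont fin _ _ \<open>0 \<le> t\<close>])
      fix s assume "s \<notin> switching_times u"
      then show "(?L has_real_derivative b * ?L s + b * (u s - c) * fst (phi \<alpha> b s p u)) (at s)"
        by (intro deriv) (simp add: switching_times_def)
      have "0 \<le> b * (u s - c) * fst (phi \<alpha> b s p u)"
        using \<open>b \<le> 0\<close> that[of s] x[of s] by (intro mult_nonneg_nonneg mult_nonpos_nonpos) auto
      then show "b * ?L s \<le> b * ?L s + b * (u s - c) * fst (phi \<alpha> b s p u)" by simp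
    qed
    then show ?thesis by (simp add: phi_0[OF adm])
  qed
  show "?L t \<le> exp (b * t) * ray_form \<alpha> b c p" if "\<And>s. c \<le> u s"
  proof -
    have "exp (b * t) * - ?L 0 \<le> - ?L t"
    proof (rule exp_lower_bound_if_deriv_ge[where f="\<lambda>s. - ?L s", OF _ fin _ _ \<open>0 \<le> t\<close>])
      show "continuous_on UNIV (\<lambda>s. - ?L s)" using cont by (intro continuous_intros)
      fix s assume "s \<notin> switching_times u"
      then show "((\<lambda>s. - ?L s) has_real_derivative - (b * ?L s + b * (u s - c) * fst (phi \<alpha> b s p u))) (at s)"
        by (intro DERIV_minus deriv) (simp add: switching_times_def)
      have "b * (u s - c) * fst (phi \<alpha> b s p u) \<le> 0"
        using \<open>b \<le> 0\<close> that[of s] x[of s] by (intro mult_nonpos_nonneg mult_nonpos_nonneg) auto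
      then show "b * - ?L s \<le> - (b * ?L s + b * (u s - c) * fst (phi \<alpha> b s p u))" by simp
    qed
    then show ?thesis by (simp add: phi_0[OF adm])
  qed
qed

definition sector :: "real \<Rightarrow> real \<Rightarrow> real \<Rightarrow> real \<Rightarrow> pt set" where
  "sector \<alpha> b umin umax =
     {p. 0 < fst p \<and> 0 \<le> ray_form \<alpha> b umax p \<and> ray_form \<alpha> b umin p \<le> 0}"

lemma clG_subset_sector:
  assumes "A \<subseteq> sector \<alpha> b umin umax"
  shows "clG A \<subseteq> sector \<alpha> b umin umax"
proof -
  let ?H = "{p. 0 \<le> ray_form \<alpha> b umax p \<and> ray_form \<alpha> b umin p \<le> 0}"
  have "closed ?H"
    unfolding ray_form_def by (intro closed_Collect_conj closed_Collect_le continuous_intros)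
  moreover have "A \<subseteq> ?H" using assms by (auto simp: sector_def)
  ultimately have "closure A \<subseteq> ?H" by (rule closure_minimal[rotated])
  then show ?thesis unfolding clG_def G_def sector_def by auto
qed

lemma ray_form_on_ray:
  assumes "u * \<alpha> - b \<noteq> 0" "snd p = m_slope \<alpha> b u * fst p"
  shows "ray_form \<alpha> b c p = b * (u - c) * fst p / (u * \<alpha> - b)"
  using assms by (simp add: ray_form_def m_slope_def field_simps)

lemma Union_rays_eq_sector:
  assumes "umin < 0" "0 < umax" "b < 0"
  shows "(\<Union>u\<in>Bset \<alpha> b umin umax. ray \<alpha> b u) = sector \<alpha> b umin umax"
proof
  show "(\<Union>u\<in>Bset \<alpha> b umin umax. ray \<alpha> b u) \<subseteq> sector \<alpha> b umin umax"
  proof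
    fix p assume "p \<in> (\<Union>u\<in>Bset \<alpha> b umin umax. ray \<alpha> b u)"
    then obtain u where u: "umin \<le> u" "u \<le> umax" "0 < u * \<alpha> - b"
      and p: "0 < fst p" "snd p = m_slope \<alpha> b u * fst p"
      by (auto simp: Bset_def ray_def G_def)
    have form: "ray_form \<alpha> b c p = b * (u - c) * fst p / (u * \<alpha> - b)" for c
      using p u by (intro ray_form_on_ray) auto
    have "0 \<le> b * (u - umax)" "b * (u - umin) \<le> 0"
      using u assms by (auto intro: mult_nonpos_nonpos mult_nonpos_nonneg)
    then have "0 \<le> b * (u - umax) * fst p" "b * (u - umin) * fst p \<le> 0"
      using p by (simp_all add: mult_nonpos_nonneg)
    then show "p \<in> sector \<alpha> b umin umax"
      using p u by (auto simp: sector_def form intro: divide_nonneg_pos divide_nonpos_pos)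
  qed
  show "sector \<alpha> b umin umax \<subseteq> (\<Union>u\<in>Bset \<alpha> b umin umax. ray \<alpha> b u)"
  proof
    fix p assume "p \<in> sector \<alpha> b umin umax"
    then have x: "0 < fst p" and hi: "- b * snd p \<le> umax * (fst p - \<alpha> * snd p)"
      and lo: "umin * (fst p - \<alpha> * snd p) \<le> - b * snd p"
      by (auto simp: sector_def ray_form_def)
    define Q where "Q = fst p - \<alpha> * snd p"
    have "0 \<le> (umax - umin) * Q" using hi lo by (simp add: Q_def algebra_simps)
    then have "0 \<le> Q" using assms by (simp add: zero_le_mult_iff)
    moreover have "Q \<noteq> 0"
    proof
      assume "Q = 0"
      then have "snd p = 0" using hi lo assms by (simp add: Q_def)
      then show False using \<open>Q = 0\<close> x by (simp add: Q_def)
    qed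
    ultimately have Q: "0 < Q" by simp
    define w where "w = - b * snd p"
    define u where "u = w / Q"
    have "umin * Q \<le> w" "w \<le> umax * Q"
      using hi lo by (simp_all add: Q_def w_def)
    then have "umin \<le> u" "u \<le> umax"
      using Q by (simp_all add: u_def pos_le_divide_eq pos_divide_le_eq)
    moreover have ud: "u * \<alpha> - b = - b * fst p / Q"
      using Q by (simp add: u_def w_def Q_def field_simps)
    moreover have "0 < - b * fst p / Q" using Q x assms by (simp add: divide_neg_pos mult_neg_pos)
    moreover have "snd p = m_slope \<alpha> b u * fst p"
      using Q x assms by (simp add: m_slope_def ud) (simp add: u_def w_def field_simps)
    ultimately show "p \<in> (\<Union>u\<in>Bset \<alpha> b umin umax. ray \<alpha> b u)"
      using x by (auto simp: Bset_def ray_def G_def intro!: bexI[of _ u])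
  qed
qed

lemma phi_in_sector:
  assumes adm: "admissible umin umax u" and "b \<le> 0" "p \<in> sector \<alpha> b umin umax" "0 \<le> t"
  shows "phi \<alpha> b t p u \<in> sector \<alpha> b umin umax"
proof -
  have u: "umin \<le> u s" "u s \<le> umax" for s using adm by (auto simp: admissible_def)
  have p: "0 < fst p" "0 \<le> ray_form \<alpha> b umax p" "ray_form \<alpha> b umin p \<le> 0"
    using assms(3) by (auto simp: sector_def)
  have "0 \<le> exp (b * t) * ray_form \<alpha> b umax p" "exp (b * t) * ray_form \<alpha> b umin p \<le> 0"
    using p by (simp_all add: mult_nonneg_nonpos)
  with exp_mult_ray_form_le[OF adm \<open>b \<le> 0\<close> p(1) \<open>0 \<le> t\<close> u(2), where \<alpha>=\<alpha>]
    ray_form_le_exp_mult[OF adm \<open>b \<le> 0\<close> p(1) \<open>0 \<le> t\<close> u(1), where \<alpha>=\<alpha>]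
  show ?thesis
    using fst_phi_pos[OF adm p(1)] by (auto simp: sector_def)
qed

lemma orbit_plus_subset_sector:
  "b \<le> 0 \<Longrightarrow> p \<in> sector \<alpha> b umin umax \<Longrightarrow> orbit_plus \<alpha> b umin umax p \<subseteq> sector \<alpha> b umin umax"
  unfolding orbit_plus_def by (auto intro: phi_in_sector)

text \<open>
  If \<open>L d < 0\<close>, the orbit of \<open>d1 = \<phi>(1, d, u)\<close> stays in the closed set
  \<open>L \<ge> min 0 (exp b L d)\<close>, which excludes \<open>d\<close>, although \<open>d\<close> lies in the closure of that orbit.
\<close>

lemma nonneg_on_cs_prop:
  fixes L :: "pt \<Rightarrow> real"
  assumes "b < 0" and cont: "continuous_on UNIV L"
    and decay: "\<And>q s v. admissible umin umax v \<Longrightarrow> 0 < fst q \<Longrightarrow> 0 \<le> s \<Longrightarrow>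
      exp (b * s) * L q \<le> L (phi \<alpha> b s q v)"
    and D: "cs_prop \<alpha> b umin umax D" and "d \<in> D"
  shows "0 \<le> L d"
proof (rule ccontr)
  assume neg: "\<not> 0 \<le> L d"
  have pos: "0 < fst q" if "q \<in> D" for q
    using D that by (auto simp: cs_prop_def G_def)
  obtain u where u: "admissible umin umax u" "\<And>t. 0 \<le> t \<Longrightarrow> phi \<alpha> b t d u \<in> D"
    using D \<open>d \<in> D\<close> unfolding cs_prop_def by blast
  define d1 where "d1 = phi \<alpha> b 1 d u"
  define w where "w = min 0 (exp b * L d)"
  have "d1 \<in> D" using u(2)[of 1] by (simp add: d1_def)
  have "w \<le> L q" if orbit: "q \<in> orbit_plus \<alpha> b umin umax d1" for q
  proof -
    obtain s v where q: "q = phi \<alpha> b s d1 v" "0 \<le> s" "admissible umin umax v"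
      using orbit unfolding orbit_plus_def by blast
    have "exp b * L d \<le> L d1"
      using decay[OF u(1) pos[OF \<open>d \<in> D\<close>], of 1] by (simp add: d1_def)
    moreover have "min 0 (L d1) \<le> exp (b * s) * L d1"
      using \<open>b < 0\<close> q(2) by (cases "0 \<le> L d1") (auto simp: mult_le_cancel_right1 mult_nonpos_nonneg)
    ultimately show ?thesis
      using decay[OF q(3) pos[OF \<open>d1 \<in> D\<close>] q(2)] q(1) by (simp add: w_def)
  qed
  moreover have "closed {q. w \<le> L q}"
    using cont by (intro closed_Collect_le continuous_intros) auto
  ultimately have "closure (orbit_plus \<alpha> b umin umax d1) \<subseteq> {q. w \<le> L q}"
    by (intro closure_minimal) auto
  moreover have "d \<in> closure (orbit_plus \<alpha> b umin umax d1)"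
    using D \<open>d \<in> D\<close> \<open>d1 \<in> D\<close> unfolding cs_prop_def clG_def by blast
  ultimately have "w \<le> L d" by blast
  moreover have "L d < exp b * L d"
    using neg \<open>b < 0\<close> by (simp add: mult_less_cancel_right1)
  ultimately show False using neg unfolding w_def min_def by (auto split: if_splits)
qed

lemma cs_prop_subset_sector:
  assumes "b < 0" "cs_prop \<alpha> b umin umax D"
  shows "D \<subseteq> sector \<alpha> b umin umax"
proof
  fix d assume "d \<in> D"
  have bound: "\<And>s. v s \<le> umax" "\<And>s. umin \<le> v s" if "admissible umin umax v" for v
    using that by (auto simp: admissible_def)
  have "0 \<le> ray_form \<alpha> b umax d"
    by (rule nonneg_on_cs_prop[OF \<open>b < 0\<close> continuous_on_ray_form _ assms(2) \<open>d \<in> D\<close>])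
       (use \<open>b < 0\<close> in \<open>auto intro: exp_mult_ray_form_le bound\<close>)
  moreover have "0 \<le> - ray_form \<alpha> b umin d"
    by (rule nonneg_on_cs_prop[where L="\<lambda>q. - ray_form \<alpha> b umin q", OF \<open>b < 0\<close> _ _ assms(2) \<open>d \<in> D\<close>])
       (use \<open>b < 0\<close> in \<open>auto intro: continuous_intros continuous_on_ray_form ray_form_le_exp_mult bound\<close>)
  moreover have "0 < fst d" using assms(2) \<open>d \<in> D\<close> by (auto simp: cs_prop_def G_def)
  ultimately show "d \<in> sector \<alpha> b umin umax" by (simp add: sector_def)
qed

section \<open>Approximate reachability inside the sector\<close>

definition flow_const :: "real \<Rightarrow> real \<Rightarrow> real \<Rightarrow> pt \<Rightarrow> real \<Rightarrow> pt" where
  "flow_const \<alpha> b c p t =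
     (fst p * exp (c * \<alpha> * t),
      (snd p - m_slope \<alpha> b c * fst p) * exp (b * t) + m_slope \<alpha> b c * fst p * exp (c * \<alpha> * t))"

lemma flow_const_0 [simp]: "flow_const \<alpha> b c p 0 = p"
  by (simp add: flow_const_def)

lemma fst_flow_const: "fst (flow_const \<alpha> b c p t) = fst p * exp (c * \<alpha> * t)"
  by (simp add: flow_const_def)

lemma flow_const_off_ray:
  "snd (flow_const \<alpha> b c p t) - m_slope \<alpha> b c * fst (flow_const \<alpha> b c p t)
    = (snd p - m_slope \<alpha> b c * fst p) * exp (b * t)"
  by (simp add: flow_const_def algebra_simps)

lemma continuous_on_flow_const: "continuous_on S (flow_const \<alpha> b c p)"
  unfolding flow_const_def by (intro continuous_intros)

lemma flow_const_has_vector_derivative: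
  assumes "c * \<alpha> - b \<noteq> 0"
  shows "(flow_const \<alpha> b c p has_vector_derivative vf \<alpha> b c (flow_const \<alpha> b c p t)) (at t)"
proof -
  let ?m = "m_slope \<alpha> b c" and ?E = "exp (c * \<alpha> * t)"
  have m: "?m * (c * \<alpha> - b) = c" using assms by (simp add: m_slope_def)
  have "((\<lambda>t. (snd p - ?m * fst p) * exp (b * t) + ?m * fst p * exp (c * \<alpha> * t)) has_real_derivative
      (snd p - ?m * fst p) * (exp (b * t) * b) + ?m * fst p * (?E * (c * \<alpha>))) (at t)"
    by (auto intro!: derivative_eq_intros)
  moreover have "?m * fst p * (?E * (c * \<alpha>)) = b * (?m * fst p * ?E) + ?m * (c * \<alpha> - b) * (fst p * ?E)"
    by (simp add: algebra_simps)
  ultimately have "((\<lambda>t. (snd p - ?m * fst p) * exp (b * t) + ?m * fst p * exp (c * \<alpha> * t)) has_real_derivative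
      b * ((snd p - ?m * fst p) * exp (b * t) + ?m * fst p * ?E) + c * (fst p * ?E)) (at t)"
    unfolding m by (simp add: algebra_simps)
  moreover have "((\<lambda>t. fst p * exp (c * \<alpha> * t)) has_real_derivative c * \<alpha> * (fst p * ?E)) (at t)"
    by (auto intro!: derivative_eq_intros)
  ultimately show ?thesis
    unfolding flow_const_def[abs_def] vf_def
    by (simp add: has_real_derivative_iff_has_vector_derivative has_vector_derivative_Pair)
qed

lemma phi_switch:
  assumes "c1 \<in> {umin..umax}" "c2 \<in> {umin..umax}" "c1 * \<alpha> - b \<noteq> 0" "c2 * \<alpha> - b \<noteq> 0" "0 \<le> t1" "0 \<le> T"
  shows "phi \<alpha> b (t1 + T) p (\<lambda>t. if t < t1 then c1 else c2)
    = flow_const \<alpha> b c2 (flow_const \<alpha> b c1 p t1) T"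
proof -
  let ?u = "\<lambda>t. if t < t1 then c1 else c2"
  let ?p = "flow_const \<alpha> b c1 p t1"
  let ?g = "\<lambda>t. if t \<le> t1 then flow_const \<alpha> b c1 p t else flow_const \<alpha> b c2 ?p (t - t1)"
  have "phi \<alpha> b (t1 + T) p ?u = ?g (t1 + T)"
  proof (rule phi_eq_solution[OF admissible_switch[OF assms(1,2)], where Bad="{t1}"])
    have "continuous_on ({..t1} \<union> {t1..}) ?g"
      by (intro continuous_on_cases continuous_on_flow_const
          continuous_on_compose2[OF continuous_on_flow_const, of _ "\<lambda>t. t - t1"] continuous_intros) auto
    moreover have "{..t1} \<union> {t1..} = (UNIV :: real set)" by auto
    ultimately show "continuous_on UNIV ?g" by simp
    show "?g 0 = p" using \<open>0 \<le> t1\<close> by simp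
    fix t :: real assume "t \<notin> {t1}"
    then consider "t < t1" | "t1 < t" by force
    then show "(?g has_vector_derivative vf \<alpha> b (?u t) (?g t)) (at t)"
    proof cases
      case 1
      have "(?g has_vector_derivative vf \<alpha> b c1 (flow_const \<alpha> b c1 p t)) (at t)"
        by (rule has_vector_derivative_transform_within_open[OF flow_const_has_vector_derivative[OF assms(3)],
            where S="{..<t1}"]) (use 1 in auto)
      with 1 show ?thesis by simp
    next
      case 2
      have "((\<lambda>t. t - t1) has_vector_derivative 1) (at t)"
        by (auto intro!: derivative_eq_intros)
      from vector_diff_chain_at[OF this flow_const_has_vector_derivative[OF assms(4), where p="?p"]]
      have "((\<lambda>t. flow_const \<alpha> b c2 ?p (t - t1)) has_vector_derivative vf \<alpha> b c2 (flow_const \<alpha> b c2 ?p (t - t1))) (at t)"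
        by (simp add: o_def)
      then have "(?g has_vector_derivative vf \<alpha> b c2 (flow_const \<alpha> b c2 ?p (t - t1))) (at t)"
        by (rule has_vector_derivative_transform_within_open[where S="{t1<..}"]) (use 2 in auto)
      with 2 show ?thesis by simp
    qed
  qed simp
  also have "?g (t1 + T) = flow_const \<alpha> b c2 ?p T"
    using \<open>0 \<le> T\<close> by (cases "T = 0") auto
  finally show ?thesis .
qed

lemma flow_const_off_slope_le:
  assumes "0 < fst p" "b < c * \<alpha>" "0 \<le> t"
  shows "\<bar>snd (flow_const \<alpha> b c p t) - m * fst (flow_const \<alpha> b c p t)\<bar>
    \<le> (\<bar>snd p / fst p - m_slope \<alpha> b c\<bar> + \<bar>m_slope \<alpha> b c - m\<bar>) * fst (flow_const \<alpha> b c p t)"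
proof -
  let ?mc = "m_slope \<alpha> b c" and ?q = "flow_const \<alpha> b c p t"
  have "\<bar>snd ?q - ?mc * fst ?q\<bar> = \<bar>snd p - ?mc * fst p\<bar> * exp (b * t)"
    by (simp add: flow_const_off_ray abs_mult)
  also have "\<dots> \<le> \<bar>snd p - ?mc * fst p\<bar> * exp (c * \<alpha> * t)"
    using assms(2,3) by (intro mult_left_mono) (simp_all add: mult_right_mono)
  also have "\<dots> = \<bar>snd p / fst p - ?mc\<bar> * fst ?q"
    using assms(1) by (simp add: fst_flow_const abs_mult diff_divide_distrib[symmetric] field_simps)
  finally have "\<bar>snd ?q - ?mc * fst ?q\<bar> \<le> \<bar>snd p / fst p - ?mc\<bar> * fst ?q" .
  moreover have "\<bar>(?mc - m) * fst ?q\<bar> = \<bar>?mc - m\<bar> * fst ?q"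
    using assms(1) by (simp add: abs_mult fst_flow_const)
  moreover have "\<bar>snd ?q - m * fst ?q\<bar> \<le> \<bar>snd ?q - ?mc * fst ?q\<bar> + \<bar>(?mc - m) * fst ?q\<bar>"
    using abs_triangle_ineq[of "snd ?q - ?mc * fst ?q" "(?mc - m) * fst ?q"] by (simp add: algebra_simps)
  ultimately show ?thesis by (simp add: distrib_right)
qed

lemma small_symmetric_controls:
  fixes umin umax b \<alpha> :: real
  assumes "umin < 0" "0 < umax" "b < 0"
  obtains \<delta> where "0 < \<delta>" "\<And>c. c = \<delta> \<or> c = - \<delta> \<Longrightarrow> umin \<le> c \<and> c \<le> umax \<and> b < c * \<alpha>"
proof
  define \<delta> where "\<delta> = min umax (min (- umin) (- b / (\<bar>\<alpha>\<bar> + 1)))"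
  show "0 < \<delta>" using assms by (simp add: \<delta>_def divide_neg_pos add_nonneg_pos)
  have "\<delta> \<le> - b / (\<bar>\<alpha>\<bar> + 1)" by (simp add: \<delta>_def)
  then have "\<delta> * (\<bar>\<alpha>\<bar> + 1) \<le> - b" by (subst (asm) pos_le_divide_eq) auto
  then have "\<delta> * \<bar>\<alpha>\<bar> < - b" using \<open>0 < \<delta>\<close> by (simp add: algebra_simps)
  moreover fix c assume "c = \<delta> \<or> c = - \<delta>"
  then have "\<bar>c * \<alpha>\<bar> = \<delta> * \<bar>\<alpha>\<bar>" using \<open>0 < \<delta>\<close> by (auto simp: abs_mult)
  moreover have "\<delta> \<le> umax" "\<delta> \<le> - umin" by (simp_all add: \<delta>_def)
  ultimately show "umin \<le> c \<and> c \<le> umax \<and> b < c * \<alpha>"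
    using \<open>c = \<delta> \<or> c = - \<delta>\<close> \<open>0 < \<delta>\<close> abs_ge_minus_self[of "c * \<alpha>"] by auto
qed

lemma exp_steering:
  fixes \<delta> \<alpha> x0 x1 :: real
  assumes "\<delta> \<noteq> 0" "\<alpha> \<noteq> 0" "0 < x0" "0 < x1"
  obtains c t where "c = \<delta> \<or> c = - \<delta>" "0 \<le> t" "x0 * exp (c * \<alpha> * t) = x1"
proof -
  define L where "L = ln (x1 / x0)"
  define c where "c = (if 0 \<le> L * (\<delta> * \<alpha>) then \<delta> else - \<delta>)"
  have "0 \<le> L * (c * \<alpha>)" "c * \<alpha> \<noteq> 0" using assms by (auto simp: c_def)
  then have "0 \<le> L / (c * \<alpha>)" and "c * \<alpha> * (L / (c * \<alpha>)) = L"
    by (simp_all add: zero_le_divide_iff zero_le_mult_iff)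
  moreover have "x0 * exp L = x1" using assms by (simp add: L_def)
  ultimately show ?thesis
    using that[of c "L / (c * \<alpha>)"] by (auto simp: c_def)
qed

lemma orbit_plus_approaches_ray_point:
  assumes "\<alpha> \<noteq> 0" "0 < \<delta>" and \<delta>: "\<And>c. c = \<delta> \<or> c = - \<delta> \<Longrightarrow> umin \<le> c \<and> c \<le> umax \<and> b < c * \<alpha>"
    and u1: "umin \<le> u1" "u1 \<le> umax" "b < u1 * \<alpha>"
    and x0: "0 < fst p" and x1: "0 < fst q" and y1: "snd q = m_slope \<alpha> b u1 * fst q" and "0 \<le> T"
  obtains c where "c = \<delta> \<or> c = - \<delta>"
    "\<exists>r\<in>orbit_plus \<alpha> b umin umax p. dist r q \<le>
       (\<bar>snd p / fst p - m_slope \<alpha> b c\<bar> + \<bar>m_slope \<alpha> b c - m_slope \<alpha> b u1\<bar>) * fst q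
         * exp (- (u1 * \<alpha> - b) * T)"
proof -
  define x' where "x' = fst q * exp (- (u1 * \<alpha>) * T)"
  obtain c t1 where c: "c = \<delta> \<or> c = - \<delta>" and "0 \<le> t1" and steer: "fst p * exp (c * \<alpha> * t1) = x'"
    using exp_steering[of \<delta> \<alpha> "fst p" x'] assms(1,2) x0 x1 by (auto simp: x'_def)
  define p' where "p' = flow_const \<alpha> b c p t1"
  define r where "r = phi \<alpha> b (t1 + T) p (\<lambda>t. if t < t1 then c else u1)"
  have r: "r = flow_const \<alpha> b u1 p' T"
    unfolding r_def p'_def using \<delta>[OF c] u1 \<open>0 \<le> t1\<close> \<open>0 \<le> T\<close> by (intro phi_switch) auto
  have orbit: "r \<in> orbit_plus \<alpha> b umin umax p"
    unfolding orbit_plus_def r_def using \<delta>[OF c] u1 \<open>0 \<le> t1\<close> \<open>0 \<le> T\<close>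
    by (auto intro!: exI[of _ "t1 + T"] admissible_switch)
  have fst_p': "fst p' = x'" using steer by (simp add: p'_def fst_flow_const)
  then have "fst r = fst q"
    by (simp add: r fst_flow_const x'_def mult.assoc exp_add[symmetric])
  then have "dist r q = \<bar>snd p' - m_slope \<alpha> b u1 * fst p'\<bar> * exp (b * T)"
    using flow_const_off_ray[of \<alpha> b u1 p' T] by (simp add: dist_prod_def dist_real_def y1 r abs_mult)
  also have "\<dots> \<le> (\<bar>snd p / fst p - m_slope \<alpha> b c\<bar> + \<bar>m_slope \<alpha> b c - m_slope \<alpha> b u1\<bar>) * x' * exp (b * T)"
    using flow_const_off_slope_le[OF x0, of b c \<alpha> t1, folded p'_def] \<delta>[OF c] \<open>0 \<le> t1\<close>
    by (intro mult_right_mono) (simp_all add: fst_p')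
  also have "\<dots> = (\<bar>snd p / fst p - m_slope \<alpha> b c\<bar> + \<bar>m_slope \<alpha> b c - m_slope \<alpha> b u1\<bar>) * fst q
      * exp (- (u1 * \<alpha> - b) * T)"
  proof -
    have "exp (- (u1 * \<alpha>) * T) * exp (b * T) = exp (- (u1 * \<alpha> - b) * T)"
      by (subst exp_add[symmetric]) (simp add: algebra_simps)
    then show ?thesis unfolding x'_def by (simp only: mult.assoc)
  qed
  finally show ?thesis using that[OF c] orbit by blast
qed

lemma sector_subset_clG_orbit_plus:
  assumes "umin < 0" "0 < umax" "\<alpha> \<noteq> 0" "b < 0"
    and p: "p \<in> sector \<alpha> b umin umax" and q: "q \<in> sector \<alpha> b umin umax"
  shows "q \<in> clG (orbit_plus \<alpha> b umin umax p)"
proof -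
  obtain u1 where u1: "umin \<le> u1" "u1 \<le> umax" "b < u1 * \<alpha>" and "q \<in> ray \<alpha> b u1"
    using q Union_rays_eq_sector[OF assms(1,2,4), of \<alpha>] by (auto simp: Bset_def)
  then have x1: "0 < fst q" and y1: "snd q = m_slope \<alpha> b u1 * fst q"
    by (auto simp: ray_def G_def)
  have x0: "0 < fst p" using p by (simp add: sector_def)
  obtain \<delta> where "0 < \<delta>" and \<delta>: "\<And>c. c = \<delta> \<or> c = - \<delta> \<Longrightarrow> umin \<le> c \<and> c \<le> umax \<and> b < c * \<alpha>"
    using small_symmetric_controls[OF assms(1,2,4)] by blast
  define dev where "dev c = \<bar>snd p / fst p - m_slope \<alpha> b c\<bar> + \<bar>m_slope \<alpha> b c - m_slope \<alpha> b u1\<bar>" for c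
  have "q \<in> closure (orbit_plus \<alpha> b umin umax p)"
  proof (rule mem_closure_if_exp_approx[where k="u1 * \<alpha> - b" and K="max (dev \<delta>) (dev (- \<delta>)) * fst q"])
    show "0 < u1 * \<alpha> - b" using u1 by simp
    fix T :: real assume "0 \<le> T"
    obtain c where "c = \<delta> \<or> c = - \<delta>"
      and "\<exists>r\<in>orbit_plus \<alpha> b umin umax p. dist r q \<le> dev c * fst q * exp (- (u1 * \<alpha> - b) * T)"
      using orbit_plus_approaches_ray_point[OF assms(3) \<open>0 < \<delta>\<close> \<delta> u1 x0 x1 y1 \<open>0 \<le> T\<close>]
      unfolding dev_def by blast
    moreover have "dev c * fst q * exp (- (u1 * \<alpha> - b) * T)
        \<le> max (dev \<delta>) (dev (- \<delta>)) * fst q * exp (- (u1 * \<alpha> - b) * T)"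
      using \<open>c = \<delta> \<or> c = - \<delta>\<close> x1 by (intro mult_right_mono) auto
    ultimately show "\<exists>r\<in>orbit_plus \<alpha> b umin umax p.
        dist r q \<le> max (dev \<delta>) (dev (- \<delta>)) * fst q * exp (- (u1 * \<alpha> - b) * T)"
      by force
  qed
  with x1 show ?thesis by (simp add: clG_def G_def)
qed

lemma clG_orbit_plus_eq_sector:
  assumes "umin < 0" "0 < umax" "\<alpha> \<noteq> 0" "b < 0" "p \<in> sector \<alpha> b umin umax"
  shows "clG (orbit_plus \<alpha> b umin umax p) = sector \<alpha> b umin umax"
proof
  show "sector \<alpha> b umin umax \<subseteq> clG (orbit_plus \<alpha> b umin umax p)"
    using sector_subset_clG_orbit_plus[OF assms] by blast
  show "clG (orbit_plus \<alpha> b umin umax p) \<subseteq> sector \<alpha> b umin umax"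
    using assms(4,5) by (intro clG_subset_sector orbit_plus_subset_sector) auto
qed

lemma cs_prop_sector:
  assumes "umin < 0" "0 < umax" "\<alpha> \<noteq> 0" "b < 0"
  shows "cs_prop \<alpha> b umin umax (sector \<alpha> b umin umax)"
  unfolding cs_prop_def
proof (intro conjI ballI)
  show "sector \<alpha> b umin umax \<subseteq> G" by (auto simp: sector_def G_def)
  fix p assume p: "p \<in> sector \<alpha> b umin umax"
  have "admissible umin umax (\<lambda>_. 0)" using assms by (intro admissible_const) auto
  moreover have "phi \<alpha> b t p (\<lambda>_. 0) \<in> sector \<alpha> b umin umax" if "0 \<le> t" for t
    using phi_in_sector[OF \<open>admissible umin umax (\<lambda>_. 0)\<close>] p \<open>b < 0\<close> that by simp
  ultimately show "\<exists>u. admissible umin umax u \<and> (\<forall>t\<ge>0. phi \<alpha> b t p u \<in> sector \<alpha> b umin umax)"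
    by blast
  show "sector \<alpha> b umin umax \<subseteq> clG (orbit_plus \<alpha> b umin umax p)"
    using clG_orbit_plus_eq_sector[OF assms p] by simp
qed

theorem mainTheorem10:
  fixes \<alpha> b umin umax :: real
  assumes "umin < 0" "0 < umax" "\<alpha> \<noteq> 0" "b < 0"
  defines "C \<equiv> (\<Union>u\<in>Bset \<alpha> b umin umax. ray \<alpha> b u)"
  shows "control_set \<alpha> b umin umax C
    \<and> (\<forall>D. control_set \<alpha> b umin umax D \<longrightarrow> D = C)
    \<and> (\<forall>p\<in>C. C = clG (orbit_plus \<alpha> b umin umax p))"
proof -
  have C: "C = sector \<alpha> b umin umax"
    unfolding C_def by (rule Union_rays_eq_sector[OF assms(1,2,4)])
  have "cs_prop \<alpha> b umin umax C"
    unfolding C by (rule cs_prop_sector[OF assms(1-4)])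
  moreover have "\<forall>p\<in>C. C = clG (orbit_plus \<alpha> b umin umax p)"
    unfolding C using clG_orbit_plus_eq_sector[OF assms(1-4)] by simp
  moreover have "D \<subseteq> C" if "cs_prop \<alpha> b umin umax D" for D
    unfolding C by (rule cs_prop_subset_sector[OF \<open>b < 0\<close> that])
  ultimately show ?thesis
    unfolding control_set_def by blast
qed

end
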